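(* There exists a quantum algorithm which, given the value $a>0$ of the initial success probability of $\mathcal A$, outputs a basis element $z$ with $\chi(z)=1$ with certainty (probability $1$), using a number of applications of $\mathcal A$ and $\mathcal A^{-1}$ (together with $\mathbf S_\chi$, $\mathbf S_0$-type phase operators and auxiliary gates not depending on $\chi$ or $\mathcal A$) that is in $\Theta(1/\sqrt a)$ in the worst case.
   Context: Let $\mathcal H$ be a finite-dimensional Hilbert space with a fixed orthonormal computational basis $\{|x\rangle\}$ indexed by a finite set of nonnegative integers containing $0$. Let $\chi:\mathbb Z\to\{0,1\}$ be a Boolean function; a basis state $|x\rangle$ is good if $\chi(x)=1$. For a state $|\Upsilon\rangle$, let $|\Upsilon_1\rangle$ be its orthogonal projection onto the span of the good basis states. Let $\mathcal A$ be a unitary on $\mathcal H$ (a quantum algorithm using no measurements), $|\Psi\rangle=\mathcal A|0\rangle$, and $a=\langle\Psi_1|\Psi_1\rangle$ its initial success probability. *)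

theory Defs
  imports Complex_Main
begin

text \<open>States of the finite-dimensional Hilbert space with computational basis
  indexed by a finite set X of nonnegative integers are represented as
  functions int \<Rightarrow> complex vanishing outside X; operators as matrices
  int \<Rightarrow> int \<Rightarrow> complex vanishing outside X \<times> X.\<close>

type_synonym state = "int \<Rightarrow> complex"
type_synonym op = "int \<Rightarrow> int \<Rightarrow> complex"

definition ket :: "int set \<Rightarrow> int \<Rightarrow> state" where
  "ket X x = (\<lambda>y. if y \<in> X \<and> y = x then 1 else 0)"

definition apply_op :: "int set \<Rightarrow> op \<Rightarrow> state \<Rightarrow> state" where
  "apply_op X M v = (\<lambda>i. if i \<in> X then (\<Sum>j\<in>X. M i j * v j) else 0)"

definition adjoint_op :: "op \<Rightarrow> op" where
  "adjoint_op M = (\<lambda>i j. cnj (M j i))"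

definition unitary_on :: "int set \<Rightarrow> op \<Rightarrow> bool" where
  "unitary_on X M \<longleftrightarrow>
     (\<forall>i j. (i \<notin> X \<or> j \<notin> X) \<longrightarrow> M i j = 0) \<and>
     (\<forall>i\<in>X. \<forall>j\<in>X. (\<Sum>k\<in>X. cnj (M k i) * M k j) = (if i = j then 1 else 0))"

definition good_prob :: "int set \<Rightarrow> (int \<Rightarrow> bool) \<Rightarrow> state \<Rightarrow> real" where
  "good_prob X \<chi> v = (\<Sum>x\<in>{x\<in>X. \<chi> x}. (cmod (v x))\<^sup>2)"

datatype gate = GateA | GateAinv | GateSchi real | GateS0 real

definition S_chi :: "(int \<Rightarrow> bool) \<Rightarrow> real \<Rightarrow> state \<Rightarrow> state" where
  "S_chi \<chi> \<phi> v = (\<lambda>x. if \<chi> x then cis \<phi> * v x else v x)"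

definition S_0 :: "real \<Rightarrow> state \<Rightarrow> state" where
  "S_0 \<phi> v = (\<lambda>x. if x = 0 then cis \<phi> * v x else v x)"

fun apply_gate :: "int set \<Rightarrow> (int \<Rightarrow> bool) \<Rightarrow> op \<Rightarrow> gate \<Rightarrow> state \<Rightarrow> state" where
  "apply_gate X \<chi> A GateA v = apply_op X A v"
| "apply_gate X \<chi> A GateAinv v = apply_op X (adjoint_op A) v"
| "apply_gate X \<chi> A (GateSchi \<phi>) v = S_chi \<chi> \<phi> v"
| "apply_gate X \<chi> A (GateS0 \<phi>) v = S_0 \<phi> v"

fun run :: "int set \<Rightarrow> (int \<Rightarrow> bool) \<Rightarrow> op \<Rightarrow> gate list \<Rightarrow> state \<Rightarrow> state" where
  "run X \<chi> A [] v = v"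
| "run X \<chi> A (g # gs) v = run X \<chi> A gs (apply_gate X \<chi> A g v)"

definition num_A_calls :: "gate list \<Rightarrow> nat" where
  "num_A_calls gs = length (filter (\<lambda>g. g = GateA \<or> g = GateAinv) gs)"

end

theory Submission
  imports Defs
begin

text \<open>Split \<Psi> = A|0> into its good and bad parts \<Psi>1 + \<Psi>0 and write
  a = |\<Psi>1|^2 = sin^2 \<theta>. The iterate A S_0(\<phi>2) A^-1 S_\<chi>(\<phi>1) maps the plane spanned by
  \<Psi>1 and \<Psi>0 to itself, so it acts on the pair of amplitudes of \<Psi>1 and \<Psi>0. For
  \<phi>1 = \<phi>2 = \<pi> it rotates by 2\<theta> (up to sign), so after m = floor(\<pi>/(4\<theta>) - 1/2) standard
  iterations the state sits at angle t = (2m+1)\<theta> with t \<le> \<pi>/2 < t + 2\<theta>. One more iterate,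
  with phases tuned to t and \<theta>, cancels the bad amplitude exactly. Every iterate preserves
  the weighted norm |\<alpha>|^2 a + |\<beta>|^2 (1 - a), so the good amplitude then carries
  probability 1. Since sqrt a \<le> \<theta> \<le> \<pi> sqrt a, the 2m + 3 calls of A and A^-1 are
  \<Theta>(1/sqrt a).\<close>

lemma unitary_on_mult_adjoint_idempotent:
  assumes "finite X" "unitary_on X A"
  shows "(\<Sum>l\<in>X. (\<Sum>k\<in>X. A p k * cnj (A l k)) * (\<Sum>k\<in>X. A l k * cnj (A q k)))
       = (\<Sum>k\<in>X. A p k * cnj (A q k))"
proof -
  have cols: "(\<Sum>l\<in>X. cnj (A l k) * A l k') = (if k = k' then 1 else 0)" if "k \<in> X" "k' \<in> X" for k k'
    using assms that unfolding unitary_on_def by blast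
  have "(\<Sum>l\<in>X. (\<Sum>k\<in>X. A p k * cnj (A l k)) * (\<Sum>k\<in>X. A l k * cnj (A q k)))
      = (\<Sum>l\<in>X. \<Sum>k\<in>X. \<Sum>k'\<in>X. A p k * (cnj (A l k) * A l k') * cnj (A q k'))"
    unfolding sum_product by (simp add: mult_ac)
  also have "\<dots> = (\<Sum>k\<in>X. \<Sum>k'\<in>X. \<Sum>l\<in>X. A p k * (cnj (A l k) * A l k') * cnj (A q k'))"
    by (subst sum.swap) (rule sum.cong[OF refl], rule sum.swap)
  also have "\<dots> = (\<Sum>k\<in>X. \<Sum>k'\<in>X. if k = k' then A p k * cnj (A q k') else 0)"
    by (intro sum.cong refl) (simp add: cols flip: sum_distrib_left sum_distrib_right)
  also have "\<dots> = (\<Sum>k\<in>X. A p k * cnj (A q k))"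
    using assms(1) by (intro sum.cong refl) simp
  finally show ?thesis .
qed

text \<open>P = A A* is a self-adjoint idempotent with trace |X|, so the squared Frobenius norm
  of I - P, namely |X| - tr P, vanishes.\<close>

lemma unitary_on_rows_orthonormal:
  assumes fin: "finite X" and U: "unitary_on X A" and i: "i \<in> X" and j: "j \<in> X"
  shows "(\<Sum>k\<in>X. A i k * cnj (A j k)) = (if i = j then 1 else 0)"
proof -
  define P where "P i j = (\<Sum>k\<in>X. A i k * cnj (A j k))" for i j
  have P_idem: "(\<Sum>l\<in>X. P p l * P l q) = P p q" for p q
    unfolding P_def by (rule unitary_on_mult_adjoint_idempotent[OF fin U])
  have P_trace: "(\<Sum>i\<in>X. P i i) = of_nat (card X)"
  proof -
    have "(\<Sum>i\<in>X. P i i) = (\<Sum>k\<in>X. \<Sum>l\<in>X. cnj (A l k) * A l k)"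
      unfolding P_def by (subst sum.swap) (simp add: mult.commute)
    also have "\<dots> = (\<Sum>k\<in>X. 1)"
      using U by (intro sum.cong refl) (simp add: unitary_on_def)
    finally show ?thesis by simp
  qed
  have P_herm: "cnj (P p q) = P q p" for p q
    by (simp add: P_def cnj_sum mult.commute)
  define Q where "Q i j = (if i = j then 1 else 0) - P i j" for i j
  have "(\<Sum>i\<in>X. \<Sum>j\<in>X. Q i j * cnj (Q i j))
      = (\<Sum>i\<in>X. \<Sum>j\<in>X. (if i = j then 1 - 2 * P i i else 0) + P i j * P j i)"
    unfolding Q_def by (intro sum.cong refl) (auto simp: P_herm algebra_simps)
  also have "\<dots> = 0"
    using fin by (simp add: sum.distrib P_idem P_trace sum_subtractf sum_distrib_left)
  finally have "complex_of_real (\<Sum>i\<in>X. \<Sum>j\<in>X. (cmod (Q i j))\<^sup>2) = 0"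
    unfolding of_real_sum complex_norm_square .
  then have "(cmod (Q i j))\<^sup>2 = 0"
    using fin i j unfolding of_real_eq_0_iff by (simp add: sum_nonneg_eq_0_iff sum_nonneg)
  then show ?thesis by (simp add: Q_def P_def split: if_splits)
qed

lemma apply_op_linear:
  "apply_op X M (\<lambda>x. u x + c * w x) = (\<lambda>i. apply_op X M u i + c * apply_op X M w i)"
  by (auto simp: apply_op_def fun_eq_iff sum.distrib sum_distrib_left algebra_simps)

lemma apply_op_adjoint_right_inverse:
  assumes "finite X" "unitary_on X A" and supp: "\<And>i. i \<notin> X \<Longrightarrow> v i = 0"
  shows "apply_op X A (apply_op X (adjoint_op A) v) = v"
proof
  fix i
  show "apply_op X A (apply_op X (adjoint_op A) v) i = v i"
  proof (cases "i \<in> X")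
    case True
    have "apply_op X A (apply_op X (adjoint_op A) v) i = (\<Sum>j\<in>X. (\<Sum>k\<in>X. A i k * cnj (A j k)) * v j)"
      using True by (simp add: apply_op_def adjoint_op_def sum_distrib_left sum_distrib_right mult_ac)
        (rule sum.swap)
    also have "\<dots> = (\<Sum>j\<in>X. if i = j then v j else 0)"
      using assms True by (intro sum.cong refl) (simp add: unitary_on_rows_orthonormal)
    also have "\<dots> = v i"
      using assms True by simp
    finally show ?thesis .
  qed (simp add: apply_op_def supp)
qed

definition superpose :: "(int \<Rightarrow> bool) \<Rightarrow> state \<Rightarrow> complex \<times> complex \<Rightarrow> state" where
  "superpose \<chi> v p = (\<lambda>x. (if \<chi> x then fst p else snd p) * v x)"

lemma S_chi_superpose: "S_chi \<chi> \<phi> (superpose \<chi> v p) = superpose \<chi> v (cis \<phi> * fst p, snd p)"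
  by (simp add: S_chi_def superpose_def fun_eq_iff)

lemma good_prob_superpose: "good_prob X \<chi> (superpose \<chi> v p) = (cmod (fst p))\<^sup>2 * good_prob X \<chi> v"
  by (simp add: good_prob_def superpose_def sum_distrib_left norm_mult power_mult_distrib)

definition grover_iterate :: "real \<Rightarrow> real \<Rightarrow> gate list" where
  "grover_iterate \<phi>1 \<phi>2 = [GateSchi \<phi>1, GateAinv, GateS0 \<phi>2, GateA]"

lemma run_append: "run X \<chi> A (gs @ hs) v = run X \<chi> A hs (run X \<chi> A gs v)"
  by (induction gs arbitrary: v) auto

lemma run_concat_replicate:
  assumes "\<And>p. run X \<chi> A gs (F p) = F (f p)"
  shows "run X \<chi> A (concat (replicate m gs)) (F p) = F ((f ^^ m) p)"
  by (induction m arbitrary: p) (simp_all add: run_append assms funpow_Suc_right del: funpow.simps)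

text \<open>A pair (\<alpha>, \<beta>) stands for the state \<alpha> \<Psi>1 + \<beta> \<Psi>0, and a for |\<Psi>1|^2; s is the
  overlap of \<Psi> with the state after S_\<chi>(\<phi>1), and A S_0(\<phi>2) A^-1 adds (e^(i \<phi>2) - 1) s \<Psi>.\<close>

definition grover_amp_step :: "real \<Rightarrow> real \<Rightarrow> real \<Rightarrow> complex \<times> complex \<Rightarrow> complex \<times> complex" where
  "grover_amp_step a \<phi>1 \<phi>2 p =
     (let s = cis \<phi>1 * fst p * of_real a + snd p * of_real (1 - a)
      in (cis \<phi>1 * fst p + (cis \<phi>2 - 1) * s, snd p + (cis \<phi>2 - 1) * s))"

definition amp_norm :: "real \<Rightarrow> complex \<times> complex \<Rightarrow> real" where
  "amp_norm a p = (cmod (fst p))\<^sup>2 * a + (cmod (snd p))\<^sup>2 * (1 - a)"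

lemma amp_norm_grover_amp_step: "amp_norm a (grover_amp_step a \<phi>1 \<phi>2 p) = amp_norm a p"
proof -
  obtain \<alpha> \<beta> where p: "p = (\<alpha>, \<beta>)" by fastforce
  have unit: "cis \<phi> * cnj (cis \<phi>) = 1" for \<phi>
    by (simp add: cis_cnj cis_mult)
  have "complex_of_real (amp_norm a (grover_amp_step a \<phi>1 \<phi>2 p)) = of_real (amp_norm a p)"
    using unit[of \<phi>1] unit[of \<phi>2]
    unfolding p amp_norm_def grover_amp_step_def Let_def fst_conv snd_conv of_real_add of_real_mult
      of_real_diff complex_norm_square complex_cnj_add complex_cnj_mult complex_cnj_diff
      complex_cnj_one complex_cnj_complex_of_real of_real_1
    by algebra
  then show ?thesis by (simp only: of_real_eq_iff)
qed

text \<open>With a = sin^2 \<theta>, this is c (sin t \<Psi>1/|\<Psi>1| + cos t \<Psi>0/|\<Psi>0|), the state at angle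
  t in the good/bad plane; \<Psi> itself is polar_amp \<theta> 1 \<theta>.\<close>

definition polar_amp :: "real \<Rightarrow> complex \<Rightarrow> real \<Rightarrow> complex \<times> complex" where
  "polar_amp \<theta> c t = (c * of_real (sin t / sin \<theta>), c * of_real (cos t / cos \<theta>))"

lemma amp_norm_polar_amp:
  assumes "sin \<theta> \<noteq> 0" "cos \<theta> \<noteq> 0"
  shows "amp_norm ((sin \<theta>)\<^sup>2) (polar_amp \<theta> c t) = (cmod c)\<^sup>2"
proof -
  have "amp_norm ((sin \<theta>)\<^sup>2) (polar_amp \<theta> c t)
      = (cmod c)\<^sup>2 * ((sin t / sin \<theta>)\<^sup>2 * (sin \<theta>)\<^sup>2 + (cos t / cos \<theta>)\<^sup>2 * (cos \<theta>)\<^sup>2)"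
    by (simp add: amp_norm_def polar_amp_def norm_mult norm_divide power_mult_distrib
        power_divide cos_squared_eq algebra_simps)
  also have "\<dots> = (cmod c)\<^sup>2"
    using assms by (simp add: power_divide)
  finally show ?thesis .
qed

lemma grover_amp_step_pi:
  assumes "sin \<theta> \<noteq> 0" "cos \<theta> \<noteq> 0"
  shows "grover_amp_step ((sin \<theta>)\<^sup>2) pi pi (polar_amp \<theta> c t) = polar_amp \<theta> (- c) (t + 2 * \<theta>)"
proof -
  have pi_step: "grover_amp_step a pi pi (c * of_real x, c * of_real y)
      = (c * of_real (- x + 2 * x * a - 2 * y * (1 - a)), c * of_real (y + 2 * x * a - 2 * y * (1 - a)))"
    for a x y by (simp add: grover_amp_step_def algebra_simps)
  have "- (sin t / sin \<theta>) + 2 * (sin t / sin \<theta>) * (sin \<theta>)\<^sup>2 - 2 * (cos t / cos \<theta>) * (cos \<theta>)\<^sup>2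
        = - (sin (t + 2 * \<theta>) / sin \<theta>)"
    using assms unfolding sin_add sin_double cos_double_sin
    by (simp add: field_simps power2_eq_square)
  moreover have "cos t / cos \<theta> + 2 * (sin t / sin \<theta>) * (sin \<theta>)\<^sup>2 - 2 * (cos t / cos \<theta>) * (cos \<theta>)\<^sup>2
        = - (cos (t + 2 * \<theta>) / cos \<theta>)"
    using assms unfolding cos_add sin_double cos_double_cos
    by (simp add: field_simps power2_eq_square)
  ultimately show ?thesis
    unfolding polar_amp_def pi_step by (simp flip: cos_squared_eq)
qed

lemma grover_amp_step_pi_funpow:
  assumes "sin \<theta> \<noteq> 0" "cos \<theta> \<noteq> 0"
  shows "(grover_amp_step ((sin \<theta>)\<^sup>2) pi pi ^^ m) (polar_amp \<theta> c t)
       = polar_amp \<theta> ((-1) ^ m * c) (t + 2 * real m * \<theta>)"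
  by (induction m) (simp_all add: grover_amp_step_pi[OF assms] algebra_simps)

lemma cis_reflect_Arg: "cis (pi - 2 * Arg z) * z = - cnj z"
proof (cases "z = 0")
  case False
  have "z = rcis (cmod z) (Arg z)" by (simp add: rcis_cmod_Arg)
  also have "cis (pi - 2 * Arg z) * \<dots> = - cnj \<dots>"
  proof -
    have "cis (pi - 2 * Arg z) * cis (Arg z) = - cis (- Arg z)"
      by (simp add: cis_mult complex_eq_iff)
    then show ?thesis by (simp add: rcis_def cis_cnj mult.left_commute)
  qed
  finally show ?thesis by simp
qed simp

text \<open>In the final step the overlap s is c z with z = e^(i \<phi>1) sin t sin \<theta> + cos t cos \<theta>.
  The phase \<phi>1 makes Re z = cos t / (2 cos \<theta>); then \<phi>2 = \<pi> - 2 arg z turns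
  (e^(i \<phi>2) - 1) z into -2 Re z, which cancels the bad amplitude cos t / cos \<theta>. The
  argument of arccos lies in [-1, 1] exactly when cos (t + 2\<theta>) \<le> 0 \<le> cos (t - 2\<theta>).\<close>

definition final_phase1 :: "real \<Rightarrow> real \<Rightarrow> real" where
  "final_phase1 \<theta> t = arccos (- (cos t * cos (2 * \<theta>)) / (sin t * sin (2 * \<theta>)))"

definition final_phase2 :: "real \<Rightarrow> real \<Rightarrow> real" where
  "final_phase2 \<theta> t =
     pi - 2 * Arg (cis (final_phase1 \<theta> t) * of_real (sin t * sin \<theta>) + of_real (cos t * cos \<theta>))"

lemma cos_final_phase1:
  assumes "cos (t + 2 * \<theta>) \<le> 0" "0 \<le> cos (t - 2 * \<theta>)"
  shows "cos (final_phase1 \<theta> t) * (sin t * sin (2 * \<theta>)) = - (cos t * cos (2 * \<theta>))"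
proof -
  have bound: "\<bar>cos t * cos (2 * \<theta>)\<bar> \<le> sin t * sin (2 * \<theta>)"
    using assms unfolding cos_add cos_diff by linarith
  show ?thesis
  proof (cases "sin t * sin (2 * \<theta>) = 0")
    case False
    then have pos: "0 < sin t * sin (2 * \<theta>)"
      using bound abs_ge_zero[of "cos t * cos (2 * \<theta>)"] by linarith
    define r where "r = - (cos t * cos (2 * \<theta>)) / (sin t * sin (2 * \<theta>))"
    have "\<bar>r\<bar> \<le> 1"
      using bound pos by (simp add: r_def abs_divide)
    then have "cos (final_phase1 \<theta> t) = r"
      unfolding final_phase1_def r_def[symmetric] by (simp add: abs_le_iff)
    moreover have "sin t * sin (2 * \<theta>) \<noteq> 0" using pos by linarith
    ultimately show ?thesis by (simp add: r_def)
  next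
    case True
    then have "\<bar>cos t * cos (2 * \<theta>)\<bar> \<le> 0" using bound by linarith
    then have "cos t * cos (2 * \<theta>) = 0" by simp
    then show ?thesis unfolding True by simp
  qed
qed

lemma grover_amp_step_final:
  assumes "sin \<theta> \<noteq> 0" "cos \<theta> \<noteq> 0" "cos (t + 2 * \<theta>) \<le> 0" "0 \<le> cos (t - 2 * \<theta>)"
  shows "snd (grover_amp_step ((sin \<theta>)\<^sup>2) (final_phase1 \<theta> t) (final_phase2 \<theta> t) (polar_amp \<theta> c t)) = 0"
proof -
  define z where "z = cis (final_phase1 \<theta> t) * of_real (sin t * sin \<theta>) + of_real (cos t * cos \<theta>)"
  have "Re z = cos (final_phase1 \<theta> t) * sin t * sin \<theta> + cos t * cos \<theta>"
    by (simp add: z_def)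
  also have "\<dots> = cos t / (2 * cos \<theta>)"
    using cos_final_phase1[OF assms(3,4)] assms(1,2)
    unfolding sin_double cos_double_cos by (simp add: field_simps power2_eq_square)
  finally have Re_z: "Re z = cos t / (2 * cos \<theta>)" .
  have s: "cis (final_phase1 \<theta> t) * (c * of_real (sin t / sin \<theta>)) * of_real ((sin \<theta>)\<^sup>2)
        + c * of_real (cos t / cos \<theta>) * of_real (1 - (sin \<theta>)\<^sup>2) = c * z"
    unfolding cos_squared_eq[symmetric] using assms(1,2) by (simp add: z_def field_simps power2_eq_square)
  have reflect: "(cis (final_phase2 \<theta> t) - 1) * z = - (z + cnj z)"
    unfolding final_phase2_def z_def[symmetric] by (simp add: left_diff_distrib cis_reflect_Arg)
  have "snd (grover_amp_step ((sin \<theta>)\<^sup>2) (final_phase1 \<theta> t) (final_phase2 \<theta> t) (polar_amp \<theta> c t))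
      = c * of_real (cos t / cos \<theta>) + (cis (final_phase2 \<theta> t) - 1) * (c * z)"
    unfolding grover_amp_step_def polar_amp_def Let_def fst_conv snd_conv s ..
  also have "\<dots> = c * (of_real (cos t / cos \<theta>) + (cis (final_phase2 \<theta> t) - 1) * z)"
    by (simp add: algebra_simps)
  also have "\<dots> = c * (of_real (cos t / cos \<theta>) - (z + cnj z))"
    unfolding reflect by simp
  also have "\<dots> = 0"
    using assms(2) by (simp add: complex_add_cnj Re_z)
  finally show ?thesis .
qed

locale unitary_algorithm =
  fixes X :: "int set" and A :: op
  assumes finite_X: "finite X" and zero_in_X: "0 \<in> X" and unitary: "unitary_on X A"
begin

abbreviation Psi :: state where "Psi \<equiv> apply_op X A (ket X 0)"

lemma Psi_eq: "Psi i = (if i \<in> X then A i 0 else 0)"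
  using finite_X zero_in_X by (simp add: apply_op_def ket_def if_distrib cong: if_cong)

lemma Psi_norm: "(\<Sum>j\<in>X. cnj (Psi j) * Psi j) = 1"
  using unitary zero_in_X unfolding unitary_on_def by (simp add: Psi_eq)

lemma reflection_about_Psi:
  assumes supp: "\<And>i. i \<notin> X \<Longrightarrow> v i = 0"
  shows "run X \<chi> A [GateAinv, GateS0 \<phi>, GateA] v
       = (\<lambda>i. v i + (cis \<phi> - 1) * (\<Sum>j\<in>X. cnj (Psi j) * v j) * Psi i)"
proof -
  define u where "u = apply_op X (adjoint_op A) v"
  define c where "c = (cis \<phi> - 1) * u 0"
  have "u 0 = (\<Sum>j\<in>X. cnj (Psi j) * v j)"
    unfolding u_def Psi_eq using zero_in_X by (simp add: apply_op_def adjoint_op_def)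
  then have c: "c = (cis \<phi> - 1) * (\<Sum>j\<in>X. cnj (Psi j) * v j)"
    by (simp add: c_def)
  have "S_0 \<phi> u = (\<lambda>x. u x + c * ket X 0 x)"
    using zero_in_X by (auto simp: S_0_def ket_def c_def fun_eq_iff algebra_simps)
  then have "run X \<chi> A [GateAinv, GateS0 \<phi>, GateA] v = (\<lambda>i. apply_op X A u i + c * Psi i)"
    by (simp add: u_def apply_op_linear)
  also have "\<dots> = (\<lambda>i. v i + c * Psi i)"
    by (simp add: u_def apply_op_adjoint_right_inverse[OF finite_X unitary supp])
  finally show ?thesis by (simp add: c)
qed

lemma inner_Psi_superpose:
  "(\<Sum>j\<in>X. cnj (Psi j) * superpose \<chi> Psi p j)
     = fst p * of_real (good_prob X \<chi> Psi) + snd p * of_real (1 - good_prob X \<chi> Psi)"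
proof -
  define w where "w j = cnj (Psi j) * Psi j" for j
  have good: "of_real (good_prob X \<chi> Psi) = sum w (X \<inter> Collect \<chi>)"
    by (simp add: good_prob_def w_def of_real_sum mult.commute Int_def flip: complex_norm_square)
  have "sum w (X \<inter> Collect \<chi>) + sum w (X \<inter> - Collect \<chi>) = 1"
    using Psi_norm sum.Int_Diff[OF finite_X, of w "Collect \<chi>"] by (simp add: w_def Diff_eq)
  then have bad: "of_real (1 - good_prob X \<chi> Psi) = sum w (X \<inter> - Collect \<chi>)"
    by (simp add: good algebra_simps)
  have "(\<Sum>j\<in>X. cnj (Psi j) * superpose \<chi> Psi p j) = (\<Sum>j\<in>X. if \<chi> j then fst p * w j else snd p * w j)"
    by (intro sum.cong refl) (simp add: superpose_def w_def)
  also have "\<dots> = fst p * sum w (X \<inter> Collect \<chi>) + snd p * sum w (X \<inter> - Collect \<chi>)"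
    using finite_X by (simp add: sum.If_cases sum_distrib_left)
  finally show ?thesis by (simp only: good bad)
qed

lemma grover_iterate_superpose:
  "run X \<chi> A (grover_iterate \<phi>1 \<phi>2) (superpose \<chi> Psi p)
     = superpose \<chi> Psi (grover_amp_step (good_prob X \<chi> Psi) \<phi>1 \<phi>2 p)"
proof -
  have supp: "superpose \<chi> Psi (cis \<phi>1 * fst p, snd p) i = 0" if "i \<notin> X" for i
    using that by (simp add: superpose_def Psi_eq)
  have "run X \<chi> A (grover_iterate \<phi>1 \<phi>2) (superpose \<chi> Psi p)
      = run X \<chi> A [GateAinv, GateS0 \<phi>2, GateA] (superpose \<chi> Psi (cis \<phi>1 * fst p, snd p))"
    by (simp add: grover_iterate_def S_chi_superpose)
  also have "\<dots> = (\<lambda>i. superpose \<chi> Psi (cis \<phi>1 * fst p, snd p) i + (cis \<phi>2 - 1)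
      * (\<Sum>j\<in>X. cnj (Psi j) * superpose \<chi> Psi (cis \<phi>1 * fst p, snd p) j) * Psi i)"
    by (rule reflection_about_Psi[OF supp])
  also have "\<dots> = superpose \<chi> Psi (grover_amp_step (good_prob X \<chi> Psi) \<phi>1 \<phi>2 p)"
    unfolding inner_Psi_superpose
    by (simp add: superpose_def grover_amp_step_def Let_def fun_eq_iff algebra_simps)
  finally show ?thesis .
qed

lemma good_prob_Psi_le_1: "good_prob X \<chi> Psi \<le> 1"
proof -
  have "complex_of_real (\<Sum>j\<in>X. (cmod (Psi j))\<^sup>2) = 1"
    using Psi_norm by (simp add: mult.commute flip: complex_norm_square)
  then have "(\<Sum>j\<in>X. (cmod (Psi j))\<^sup>2) = 1"
    by (simp only: of_real_eq_1_iff)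
  moreover have "good_prob X \<chi> Psi \<le> (\<Sum>j\<in>X. (cmod (Psi j))\<^sup>2)"
    unfolding good_prob_def using finite_X by (intro sum_mono2) auto
  ultimately show ?thesis by simp
qed

end

definition grover_angle :: "real \<Rightarrow> real" where
  "grover_angle a = arcsin (sqrt a)"

definition grover_rounds :: "real \<Rightarrow> nat" where
  "grover_rounds a = nat \<lfloor>pi / (4 * grover_angle a) - 1 / 2\<rfloor>"

lemma grover_angle_bounds:
  assumes "0 < a" "a < 1"
  shows "0 < grover_angle a" "grover_angle a < pi / 2"
proof -
  have s: "0 < sqrt a" "sqrt a < 1" using assms by auto
  show "0 < grover_angle a" "grover_angle a < pi / 2"
    using arcsin_less_arcsin[of 0 "sqrt a"] arcsin_less_arcsin[of "sqrt a" 1] s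
    by (simp_all add: grover_angle_def)
qed

lemma sin_cos_grover_angle:
  assumes "0 < a" "a < 1"
  shows "sin (grover_angle a) = sqrt a" "cos (grover_angle a) = sqrt (1 - a)"
proof -
  have "0 < sqrt a" "sqrt a < 1" using assms by auto
  then have "- 1 \<le> sqrt a" "sqrt a \<le> 1" by linarith+
  then show "sin (grover_angle a) = sqrt a" "cos (grover_angle a) = sqrt (1 - a)"
    using assms by (simp_all add: grover_angle_def sin_arcsin cos_arcsin)
qed

lemma grover_rounds_bounds:
  assumes "0 < a" "a < 1"
  shows "(2 * real (grover_rounds a) + 1) * grover_angle a \<le> pi / 2"
    "pi / 2 < (2 * real (grover_rounds a) + 3) * grover_angle a"
proof -
  define \<theta> where "\<theta> = grover_angle a"
  have \<theta>: "0 < \<theta>" "\<theta> < pi / 2" using grover_angle_bounds[OF assms] by (simp_all add: \<theta>_def)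
  then have "0 \<le> pi / (4 * \<theta>) - 1 / 2" by (simp add: field_simps)
  then have m: "real (grover_rounds a) = of_int \<lfloor>pi / (4 * \<theta>) - 1 / 2\<rfloor>"
    by (simp add: grover_rounds_def \<theta>_def)
  have "real (grover_rounds a) \<le> pi / (4 * \<theta>) - 1 / 2" "pi / (4 * \<theta>) - 1 / 2 < real (grover_rounds a) + 1"
    unfolding m by linarith+
  with \<theta> show "(2 * real (grover_rounds a) + 1) * grover_angle a \<le> pi / 2"
    "pi / 2 < (2 * real (grover_rounds a) + 3) * grover_angle a"
    by (simp_all add: \<theta>_def field_simps)
qed

lemma mult_cos_le_sin:
  fixes x :: real
  assumes "0 \<le> x" "x \<le> pi"
  shows "x * cos x \<le> sin x"
proof -
  have "(\<lambda>y. sin y - y * cos y) 0 \<le> (\<lambda>y. sin y - y * cos y) x"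
  proof (rule DERIV_nonneg_imp_increasing_open[OF assms(1)])
    fix y :: real
    assume y: "0 < y" "y < x"
    have "((\<lambda>y. sin y - y * cos y) has_real_derivative y * sin y) (at y)"
      by (auto intro!: derivative_eq_intros)
    moreover have "0 \<le> y * sin y"
      using y assms by (simp add: sin_ge_zero)
    ultimately show "\<exists>d. ((\<lambda>y. sin y - y * cos y) has_real_derivative d) (at y) \<and> 0 \<le> d"
      by blast
  qed (intro continuous_intros)
  then show ?thesis by simp
qed

lemma grover_angle_le:
  assumes "0 < a" "a < 1"
  shows "sqrt a \<le> grover_angle a" "grover_angle a \<le> pi * sqrt a"
proof -
  note \<theta> = sin_cos_grover_angle[OF assms] grover_angle_bounds[OF assms]
  show "sqrt a \<le> grover_angle a"
    using sin_x_le_x[of "grover_angle a"] \<theta> by simp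
  show "grover_angle a \<le> pi * sqrt a"
  proof (cases "a < 1 / 4")
    case True
    then have "1 / 2 < sqrt (1 - a)"
      by (intro real_less_rsqrt) (simp add: power2_eq_square)
    then have "grover_angle a * (1 / 2) \<le> grover_angle a * cos (grover_angle a)"
      using \<theta> by simp
    also have "\<dots> \<le> sqrt a"
      using mult_cos_le_sin[of "grover_angle a"] \<theta> by simp
    finally have "grover_angle a \<le> 2 * sqrt a" by simp
    also have "\<dots> \<le> pi * sqrt a"
      using assms pi_ge_two by (intro mult_right_mono) auto
    finally show ?thesis .
  next
    case False
    then have "1 / 2 \<le> sqrt a"
      by (intro real_le_rsqrt) (simp add: power2_eq_square)
    then have "pi * (1 / 2) \<le> pi * sqrt a"
      by (intro mult_left_mono) auto
    then show ?thesis
      using \<theta>(4) by linarith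
  qed
qed

lemma grover_final_angle_conditions:
  assumes "0 < a" "a < 1"
  defines "\<theta> \<equiv> grover_angle a" and "t \<equiv> (2 * real (grover_rounds a) + 1) * grover_angle a"
  shows "cos (t + 2 * \<theta>) \<le> 0" "0 \<le> cos (t - 2 * \<theta>)"
proof -
  have \<theta>: "0 < \<theta>" "\<theta> < pi / 2" using grover_angle_bounds[OF assms(1,2)] by (simp_all add: \<theta>_def)
  have t: "t \<le> pi / 2" "pi / 2 < t + 2 * \<theta>"
    using grover_rounds_bounds[OF assms(1,2)] by (simp_all add: t_def \<theta>_def algebra_simps)
  have "\<theta> \<le> t" using \<theta> by (simp add: t_def \<theta>_def)
  have "0 \<le> cos (t + 2 * \<theta> - pi)"
    using \<theta> t by (intro cos_ge_zero) auto
  then show "cos (t + 2 * \<theta>) \<le> 0" by simp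
  show "0 \<le> cos (t - 2 * \<theta>)"
    using \<theta> t \<open>\<theta> \<le> t\<close> by (intro cos_ge_zero) auto
qed

text \<open>For a = 1 the state \<Psi> is already good, while the angle formulas would divide by
  cos \<theta> = 0.\<close>

definition exact_grover :: "real \<Rightarrow> gate list" where
  "exact_grover a =
     (if a < 1 then
        let \<theta> = grover_angle a; m = grover_rounds a; t = (2 * real m + 1) * \<theta>
        in GateA # concat (replicate m (grover_iterate pi pi))
             @ grover_iterate (final_phase1 \<theta> t) (final_phase2 \<theta> t)
      else [GateA])"

lemma num_A_calls_exact_grover:
  "num_A_calls (exact_grover a) = (if a < 1 then 2 * grover_rounds a + 3 else 1)"
proof -
  have "length (filter P (concat (replicate m xs))) = m * length (filter P xs)" for P m and xs :: "gate list"
    by (induction m) auto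
  then show ?thesis
    by (simp add: exact_grover_def num_A_calls_def grover_iterate_def Let_def)
qed

lemma grover_rounds_count_bounds:
  assumes "0 < a" "a < 1"
  defines "n \<equiv> 2 * real (grover_rounds a) + 3"
  shows "1 / 2 / sqrt a \<le> n" "n \<le> 4 / sqrt a"
proof -
  define \<theta> where "\<theta> = grover_angle a"
  have \<theta>: "0 < \<theta>" "sqrt a \<le> \<theta>" "\<theta> \<le> pi * sqrt a"
    using grover_angle_bounds[OF assms(1,2)] grover_angle_le[OF assms(1,2)] by (simp_all add: \<theta>_def)
  have n: "(n - 2) * \<theta> \<le> pi / 2" "pi / 2 < n * \<theta>"
    using grover_rounds_bounds[OF assms(1,2)] by (simp_all add: n_def \<theta>_def algebra_simps)
  have sa: "0 < sqrt a" "sqrt a \<le> 1" using assms by auto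
  have pos: "0 < \<theta> * sqrt a" using \<theta>(1) sa(1) by simp
  have "1 / 2 / sqrt a = pi / (2 * (pi * sqrt a))" by simp
  also have "\<dots> \<le> pi / (2 * \<theta>)"
    using \<theta>(3) pos by (intro divide_left_mono) simp_all
  also have "\<dots> < n" using n(2) \<theta>(1) by (simp add: field_simps)
  finally show "1 / 2 / sqrt a \<le> n" by simp
  have "n \<le> pi / (2 * \<theta>) + 2" using n(1) \<theta>(1) by (simp add: field_simps)
  also have "\<dots> \<le> pi / (2 * sqrt a) + 2 / sqrt a"
  proof (rule add_mono)
    show "pi / (2 * \<theta>) \<le> pi / (2 * sqrt a)"
      using \<theta>(2) pos by (intro divide_left_mono) simp_all
    show "2 \<le> 2 / sqrt a"
      using sa by (simp add: field_simps)
  qed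
  also have "\<dots> \<le> 4 / sqrt a" using sa pi_less_4 by (simp add: field_simps)
  finally show "n \<le> 4 / sqrt a" .
qed

lemma num_A_calls_exact_grover_bounds:
  assumes "0 < a" "a \<le> 1"
  shows "1 / 2 / sqrt a \<le> real (num_A_calls (exact_grover a))"
    and "real (num_A_calls (exact_grover a)) \<le> 4 / sqrt a"
proof -
  have "a < 1 \<or> a = 1" using assms(2) by auto
  then show "1 / 2 / sqrt a \<le> real (num_A_calls (exact_grover a))"
    and "real (num_A_calls (exact_grover a)) \<le> 4 / sqrt a"
    using grover_rounds_count_bounds[OF assms(1)] by (auto simp: num_A_calls_exact_grover)
qed

context unitary_algorithm
begin

lemma good_prob_exact_grover:
  assumes pos: "0 < good_prob X \<chi> Psi"
  shows "good_prob X \<chi> (run X \<chi> A (exact_grover (good_prob X \<chi> Psi)) (ket X 0)) = 1"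
proof -
  define a where "a = good_prob X \<chi> Psi"
  have "a \<le> 1" unfolding a_def by (rule good_prob_Psi_le_1)
  then consider "a = 1" | "a < 1" by (cases "a < 1") auto
  then show ?thesis
  proof cases
    case 1
    then show ?thesis by (simp add: exact_grover_def a_def)
  next
    case 2
    have a: "0 < a" "a < 1" using pos 2 by (simp_all add: a_def)
    define \<theta> where "\<theta> = grover_angle a"
    define m where "m = grover_rounds a"
    define t where "t = (2 * real m + 1) * \<theta>"
    have \<theta>: "sin \<theta> \<noteq> 0" "cos \<theta> \<noteq> 0" "a = (sin \<theta>)\<^sup>2"
      using sin_cos_grover_angle[OF a] a by (simp_all add: \<theta>_def)
    have init: "run X \<chi> A [GateA] (ket X 0) = superpose \<chi> Psi (polar_amp \<theta> 1 \<theta>)"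
      using \<theta> by (simp add: superpose_def polar_amp_def fun_eq_iff)
    have rounds: "run X \<chi> A (concat (replicate m (grover_iterate pi pi))) (superpose \<chi> Psi (polar_amp \<theta> 1 \<theta>))
        = superpose \<chi> Psi (polar_amp \<theta> ((-1) ^ m) t)"
      by (simp add: run_concat_replicate grover_iterate_superpose grover_amp_step_pi_funpow
          \<theta> a_def[symmetric] t_def algebra_simps)
    define p where "p = grover_amp_step a (final_phase1 \<theta> t) (final_phase2 \<theta> t) (polar_amp \<theta> ((-1) ^ m) t)"
    have final: "run X \<chi> A (exact_grover a) (ket X 0) = superpose \<chi> Psi p"
      using a init rounds
      by (simp add: exact_grover_def run_append grover_iterate_superpose p_def
          \<theta>_def[symmetric] m_def[symmetric] t_def[symmetric] a_def[symmetric] Let_def)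
    have "cos (t + 2 * \<theta>) \<le> 0" "0 \<le> cos (t - 2 * \<theta>)"
      using grover_final_angle_conditions[OF a] by (simp_all add: t_def m_def \<theta>_def)
    then have "snd p = 0"
      using grover_amp_step_final[OF \<theta>(1,2)] by (simp add: p_def \<theta>(3))
    moreover have "amp_norm a p = 1"
      using amp_norm_polar_amp[OF \<theta>(1,2)] by (simp add: p_def amp_norm_grover_amp_step \<theta>(3) norm_power)
    ultimately have "(cmod (fst p))\<^sup>2 * a = 1" by (simp add: amp_norm_def)
    then show ?thesis using final by (simp add: good_prob_superpose a_def)
  qed
qed

end

theorem theorem3:
  "\<exists>alg :: real \<Rightarrow> gate list. \<exists>c1 c2 :: real. 0 < c1 \<and> 0 < c2 \<and>
     (\<forall>a. 0 < a \<and> a \<le> 1 \<longrightarrow>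
        c1 / sqrt a \<le> real (num_A_calls (alg a)) \<and>
        real (num_A_calls (alg a)) \<le> c2 / sqrt a) \<and>
     (\<forall>(X :: int set) (\<chi> :: int \<Rightarrow> bool) (A :: op).
        finite X \<longrightarrow> 0 \<in> X \<longrightarrow> (\<forall>x\<in>X. 0 \<le> x) \<longrightarrow> unitary_on X A \<longrightarrow>
        (let a = good_prob X \<chi> (apply_op X A (ket X 0)) in
          0 < a \<longrightarrow> good_prob X \<chi> (run X \<chi> A (alg a) (ket X 0)) = 1))"
proof (rule exI[of _ exact_grover], rule exI[of _ "1 / 2"], rule exI[of _ 4], intro conjI allI impI)
  show "0 < (1 / 2 :: real)" "0 < (4 :: real)" by simp_all
next
  fix a :: real
  assume "0 < a \<and> a \<le> 1"
  then show "1 / 2 / sqrt a \<le> real (num_A_calls (exact_grover a))"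
    and "real (num_A_calls (exact_grover a)) \<le> 4 / sqrt a"
    using num_A_calls_exact_grover_bounds by auto
next
  fix X :: "int set" and \<chi> :: "int \<Rightarrow> bool" and A :: op
  assume "finite X" "0 \<in> X" "\<forall>x\<in>X. 0 \<le> x" "unitary_on X A"
  then interpret unitary_algorithm X A by unfold_locales
  show "let a = good_prob X \<chi> (apply_op X A (ket X 0)) in
          0 < a \<longrightarrow> good_prob X \<chi> (run X \<chi> A (exact_grover a) (ket X 0)) = 1"
    using good_prob_exact_grover by (simp add: Let_def)
qed

end
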